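(* Let $\Lambda:\mathbb{R}\to[0,1]$ be a decreasing function. Then for every $X\in L^0$, $$\mathrm{VaR}_{\Lambda}(X)=\sup_{x\in\mathbb{R}}\left(\mathrm{VaR}_{\Lambda(x)}(X)\wedge x\right)=\inf_{x\in\mathbb{R}}\left(\mathrm{VaR}_{\Lambda(x)}(X)\vee x\right),$$ and $$\mathrm{VaR}^+_{\Lambda}(X)=\sup_{x\in\mathbb{R}}\left(\mathrm{VaR}^+_{\Lambda(x)}(X)\wedge x\right)=\inf_{x\in\mathbb{R}}\left(\mathrm{VaR}^+_{\Lambda(x)}(X)\vee x\right).$$
   Context: $(\Omega,\mathcal F,\mathbb P)$ is an atomless probability space and $L^0$ is the set of all random variables on it. "Decreasing" means weakly decreasing. $x\wedge y=\min\{x,y\}$, $x\vee y=\max\{x,y\}$. For $\alpha\in[0,1]$ and $X\in L^0$: $\mathrm{VaR}_\alpha(X)=\inf\{x\in\mathbb{R}:\mathbb P(X\le x)\ge\alpha\}$ and $\mathrm{VaR}^+_\alpha(X)=\inf\{x\in\mathbb{R}:\mathbb P(X\le x)>\alpha\}$ (with $\inf\mathbb{R}=-\infty$, $\inf\emptyset=\infty$; so $\mathrm{VaR}_0=-\infty$, $\mathrm{VaR}^+_1=\infty$). For a decreasing $\Lambda:\mathbb{R}\to[0,1]$ and $X\in L^0$: $\mathrm{VaR}_\Lambda(X)=\inf\{x\in\mathbb{R}:\mathbb P(X\le x)\ge\Lambda(x)\}$ and $\mathrm{VaR}^+_\Lambda(X)=\inf\{x\in\mathbb{R}:\mathbb P(X\le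 x)>\Lambda(x)\}$. *)

theory Defs
  imports "HOL-Probability.Probability"
begin

definition atomless :: "'a measure \<Rightarrow> bool" where
  "atomless M \<longleftrightarrow> (\<forall>A\<in>sets M. measure M A > 0 \<longrightarrow>
      (\<exists>B\<in>sets M. B \<subseteq> A \<and> 0 < measure M B \<and> measure M B < measure M A))"

definition cdf_at :: "'a measure \<Rightarrow> ('a \<Rightarrow> real) \<Rightarrow> real \<Rightarrow> real" where
  "cdf_at M X x = measure M {\<omega>\<in>space M. X \<omega> \<le> x}"

text \<open>Value-at-risk, valued in the extended reals (Inf of the empty set is \<infinity>,
  Inf of an unbounded-below set of reals is -\<infinity>).\<close>
definition VaR :: "'a measure \<Rightarrow> ('a \<Rightarrow> real) \<Rightarrow> real \<Rightarrow> ereal" where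
  "VaR M X \<alpha> = Inf (ereal ` {x. cdf_at M X x \<ge> \<alpha>})"

definition VaR_plus :: "'a measure \<Rightarrow> ('a \<Rightarrow> real) \<Rightarrow> real \<Rightarrow> ereal" where
  "VaR_plus M X \<alpha> = Inf (ereal ` {x. cdf_at M X x > \<alpha>})"

definition VaR_Lambda :: "'a measure \<Rightarrow> ('a \<Rightarrow> real) \<Rightarrow> (real \<Rightarrow> real) \<Rightarrow> ereal" where
  "VaR_Lambda M X \<Lambda> = Inf (ereal ` {x. cdf_at M X x \<ge> \<Lambda> x})"

definition VaR_Lambda_plus :: "'a measure \<Rightarrow> ('a \<Rightarrow> real) \<Rightarrow> (real \<Rightarrow> real) \<Rightarrow> ereal" where
  "VaR_Lambda_plus M X \<Lambda> = Inf (ereal ` {x. cdf_at M X x > \<Lambda> x})"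

end

theory Submission
  imports Defs
begin

text \<open>Write \<open>S x t\<close> for \<open>\<Lambda> t \<le> F x\<close> (respectively \<open>\<Lambda> t < F x\<close>), with \<open>F\<close> the distribution
  function of \<open>X\<close>; \<open>S\<close> is increasing in both arguments. The left-hand side is the infimum \<open>v\<close>
  of the diagonal set \<open>{x. S x x}\<close>, and the VaR at level \<open>\<Lambda> t\<close> is the infimum \<open>w t\<close> of the
  section \<open>{x. S x t}\<close>. If \<open>t < v\<close>, no point of the section lies left of \<open>t\<close> and the points
  right of \<open>t\<close> are diagonal, so \<open>v \<le> w t\<close>; if \<open>v < t\<close>, the section contains the diagonal
  points left of \<open>t\<close>, so \<open>w t \<le> v\<close>. Hence \<open>min (w t) t\<close> never exceeds \<open>v\<close> and equals \<open>t\<close>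
  for \<open>t < v\<close>, and dually for \<open>max (w t) t\<close>.\<close>

lemma mono_cdf_at:
  assumes "finite_measure M" and "X \<in> borel_measurable M"
  shows "mono (cdf_at M X)"
proof (rule monoI)
  fix x y :: real
  assume "x \<le> y"
  moreover have "{\<omega>\<in>space M. X \<omega> \<le> y} \<in> sets M"
    using assms(2) by measurable
  ultimately show "cdf_at M X x \<le> cdf_at M X y"
    unfolding cdf_at_def by (intro finite_measure.finite_measure_mono[OF assms(1)]) auto
qed

lemma SUP_min_eq_if_crossing:
  fixes f :: "real \<Rightarrow> ereal"
  assumes below: "\<And>t. ereal t < v \<Longrightarrow> v \<le> f t"
    and above: "\<And>t. v < ereal t \<Longrightarrow> f t \<le> v"
  shows "(SUP t. min (f t) (ereal t)) = v"
proof (rule antisym)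
  show "(SUP t. min (f t) (ereal t)) \<le> v"
  proof (rule SUP_least)
    fix t
    show "min (f t) (ereal t) \<le> v"
    proof (cases "ereal t \<le> v")
      case False
      then show ?thesis
        using above[of t] by (simp add: min.coboundedI1)
    qed (rule min.coboundedI2)
  qed
next
  show "v \<le> (SUP t. min (f t) (ereal t))"
  proof (rule dense_le)
    fix y
    assume "y < v"
    then obtain r where r: "y < ereal r" "ereal r < v"
      using ereal_dense2 by blast
    have "y \<le> ereal r"
      using r(1) by simp
    also have "ereal r = min (f r) (ereal r)"
      using below[OF r(2)] r(2) by simp
    also have "\<dots> \<le> (SUP t. min (f t) (ereal t))"
      by (rule SUP_upper) simp
    finally show "y \<le> (SUP t. min (f t) (ereal t))" .
  qed
qed

lemma INF_max_eq_if_crossing: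
  fixes f :: "real \<Rightarrow> ereal"
  assumes below: "\<And>t. ereal t < v \<Longrightarrow> v \<le> f t"
    and above: "\<And>t. v < ereal t \<Longrightarrow> f t \<le> v"
  shows "(INF t. max (f t) (ereal t)) = v"
proof (rule antisym)
  show "v \<le> (INF t. max (f t) (ereal t))"
  proof (rule INF_greatest)
    fix t
    show "v \<le> max (f t) (ereal t)"
    proof (cases "ereal t < v")
      case True
      then show ?thesis
        using below[of t] by (simp add: max.coboundedI1)
    qed (simp add: max.coboundedI2)
  qed
next
  show "(INF t. max (f t) (ereal t)) \<le> v"
  proof (rule dense_ge)
    fix y
    assume "v < y"
    then obtain r where r: "v < ereal r" "ereal r < y"
      using ereal_dense2 by blast
    have "(INF t. max (f t) (ereal t)) \<le> max (f r) (ereal r)"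
      by (rule INF_lower) simp
    also have "\<dots> = ereal r"
      using above[OF r(1)] r(1) by simp
    also have "\<dots> \<le> y"
      using r(2) by simp
    finally show "(INF t. max (f t) (ereal t)) \<le> y" .
  qed
qed

lemma diagonal_Inf_le_section_Inf:
  fixes S :: "real \<Rightarrow> real \<Rightarrow> bool"
  assumes "mono S" and "\<And>x. mono (S x)"
    and t: "ereal t < Inf (ereal ` {x. S x x})"
  shows "Inf (ereal ` {x. S x x}) \<le> Inf (ereal ` {x. S x t})"
proof (rule Inf_greatest)
  fix z
  assume "z \<in> ereal ` {x. S x t}"
  then obtain x where z: "z = ereal x" and "S x t"
    by blast
  have "\<not> S t t"
  proof
    assume "S t t"
    then have "Inf (ereal ` {x. S x x}) \<le> ereal t"
      by (auto intro: Inf_lower)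
    with t show False
      by simp
  qed
  have "t < x"
  proof (rule ccontr)
    assume "\<not> t < x"
    then have "S x \<le> S t"
      using \<open>mono S\<close> by (simp add: monoD)
    with \<open>S x t\<close> \<open>\<not> S t t\<close> show False
      by (auto dest: le_funD)
  qed
  then have "S x t \<le> S x x"
    by (intro monoD[OF \<open>mono (S x)\<close>] less_imp_le)
  with \<open>S x t\<close> have "S x x"
    by simp
  then show "Inf (ereal ` {x. S x x}) \<le> z"
    unfolding z by (auto intro: Inf_lower)
qed

lemma section_Inf_le_diagonal_Inf:
  fixes S :: "real \<Rightarrow> real \<Rightarrow> bool"
  assumes "\<And>x. mono (S x)"
    and t: "Inf (ereal ` {x. S x x}) < ereal t"
  shows "Inf (ereal ` {x. S x t}) \<le> Inf (ereal ` {x. S x x})"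
proof (rule dense_ge)
  fix y
  assume "Inf (ereal ` {x. S x x}) < y"
  with t have "Inf (ereal ` {x. S x x}) < min y (ereal t)"
    by simp
  then obtain a where "S a a" and "ereal a < min y (ereal t)"
    unfolding Inf_less_iff by blast
  then have a: "ereal a < y" "a < t"
    by simp_all
  then have "S a a \<le> S a t"
    by (intro monoD[OF \<open>mono (S a)\<close>] less_imp_le)
  with \<open>S a a\<close> have "S a t"
    by simp
  then have "Inf (ereal ` {x. S x t}) \<le> ereal a"
    by (auto intro: Inf_lower)
  with a show "Inf (ereal ` {x. S x t}) \<le> y"
    by simp
qed

lemma threshold_comparisons_mono:
  fixes F :: "'a::order \<Rightarrow> 'c::order" and L :: "'b::order \<Rightarrow> 'c"
  assumes F: "mono F" and L: "antimono L"
  shows "mono (\<lambda>x t. L t \<le> F x)" "mono (\<lambda>x t. L t < F x)"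
    and "mono (\<lambda>t. L t \<le> F x)" "mono (\<lambda>t. L t < F x)"
proof -
  show "mono (\<lambda>x t. L t \<le> F x)" "mono (\<lambda>x t. L t < F x)"
    by (intro monoI le_funI le_boolI;
        blast intro: order_trans[OF _ monoD[OF F]] order_less_le_trans[OF _ monoD[OF F]])+
  show "mono (\<lambda>t. L t \<le> F x)" "mono (\<lambda>t. L t < F x)"
    by (intro monoI le_boolI;
        blast intro: order_trans[OF antimonoD[OF L]] order_le_less_trans[OF antimonoD[OF L]])+
qed

lemma diagonal_Inf_eq_SUP_min_eq_INF_max:
  fixes S :: "real \<Rightarrow> real \<Rightarrow> bool"
  assumes "mono S" and "\<And>x. mono (S x)"
  shows "Inf (ereal ` {x. S x x}) = (SUP t. min (Inf (ereal ` {x. S x t})) (ereal t))"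
    and "Inf (ereal ` {x. S x x}) = (INF t. max (Inf (ereal ` {x. S x t})) (ereal t))"
  using SUP_min_eq_if_crossing INF_max_eq_if_crossing
    diagonal_Inf_le_section_Inf[OF assms] section_Inf_le_diagonal_Inf[OF assms(2)]
  by (simp_all only: eq_commute)

theorem proposition1:
  fixes M :: "'a measure" and X :: "'a \<Rightarrow> real" and \<Lambda> :: "real \<Rightarrow> real"
  assumes "prob_space M" and "atomless M"
    and "antimono \<Lambda>" and "\<And>x. 0 \<le> \<Lambda> x \<and> \<Lambda> x \<le> 1"
    and "X \<in> borel_measurable M"
  shows "VaR_Lambda M X \<Lambda> = (SUP x. min (VaR M X (\<Lambda> x)) (ereal x))
       \<and> VaR_Lambda M X \<Lambda> = (INF x. max (VaR M X (\<Lambda> x)) (ereal x))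
       \<and> VaR_Lambda_plus M X \<Lambda> = (SUP x. min (VaR_plus M X (\<Lambda> x)) (ereal x))
       \<and> VaR_Lambda_plus M X \<Lambda> = (INF x. max (VaR_plus M X (\<Lambda> x)) (ereal x))"
proof -
  have F: "mono (cdf_at M X)"
    using prob_space.finite_measure[OF assms(1)] assms(5) by (rule mono_cdf_at)
  note thresholds_mono = threshold_comparisons_mono[OF F \<open>antimono \<Lambda>\<close>]
  show ?thesis
    unfolding VaR_Lambda_def VaR_Lambda_plus_def VaR_def VaR_plus_def
    using diagonal_Inf_eq_SUP_min_eq_INF_max[OF thresholds_mono(1,3)]
      diagonal_Inf_eq_SUP_min_eq_INF_max[OF thresholds_mono(2,4)]
    by blast
qed

end
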